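(* For all integers $m,n\geq 2$, the grid $P_m\Box P_n$ has an independent $[1,2]$-set.
   Context: $P_k$ denotes the path on $k$ vertices and $P_m\Box P_n$ the Cartesian product of two paths (the $m\times n$ grid graph). A set $S$ of vertices of a graph $G$ is independent if no two vertices of $S$ are adjacent, and dominating if every vertex not in $S$ has at least one neighbor in $S$. An independent $[1,2]$-set of $G$ is an independent dominating set $S$ such that every vertex $v\in V(G)\setminus S$ has at least one and at most two neighbors in $S$. *)

theory Defs
  imports Main
begin

definition independent_set :: "'a set \<Rightarrow> ('a \<Rightarrow> 'a \<Rightarrow> bool) \<Rightarrow> 'a set \<Rightarrow> bool" where
  "independent_set V E S \<longleftrightarrow> S \<subseteq> V \<and> (\<forall>u\<in>S. \<forall>v\<in>S. \<not> E u v)"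

definition dominating_set :: "'a set \<Rightarrow> ('a \<Rightarrow> 'a \<Rightarrow> bool) \<Rightarrow> 'a set \<Rightarrow> bool" where
  "dominating_set V E S \<longleftrightarrow> S \<subseteq> V \<and> (\<forall>v\<in>V - S. \<exists>u\<in>S. E v u)"

definition independent_12_set :: "'a set \<Rightarrow> ('a \<Rightarrow> 'a \<Rightarrow> bool) \<Rightarrow> 'a set \<Rightarrow> bool" where
  "independent_12_set V E S \<longleftrightarrow> independent_set V E S \<and> dominating_set V E S \<and>
     (\<forall>v\<in>V - S. 1 \<le> card {u\<in>S. E v u} \<and> card {u\<in>S. E v u} \<le> 2)"

definition path_vertices :: "nat \<Rightarrow> nat set" where
  "path_vertices k = {0..<k}"

definition path_adj :: "nat \<Rightarrow> nat \<Rightarrow> bool" where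
  "path_adj i j \<longleftrightarrow> i = j + 1 \<or> j = i + 1"

definition cart_vertices :: "'a set \<Rightarrow> 'b set \<Rightarrow> ('a \<times> 'b) set" where
  "cart_vertices V1 V2 = V1 \<times> V2"

definition cart_adj :: "('a \<Rightarrow> 'a \<Rightarrow> bool) \<Rightarrow> ('b \<Rightarrow> 'b \<Rightarrow> bool) \<Rightarrow> 'a \<times> 'b \<Rightarrow> 'a \<times> 'b \<Rightarrow> bool" where
  "cart_adj E1 E2 x y \<longleftrightarrow> (fst x = fst y \<and> E2 (snd x) (snd y)) \<or> (snd x = snd y \<and> E1 (fst x) (fst y))"

definition grid_vertices :: "nat \<Rightarrow> nat \<Rightarrow> (nat \<times> nat) set" where
  "grid_vertices m n = cart_vertices (path_vertices m) (path_vertices n)"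

definition grid_adj :: "nat \<times> nat \<Rightarrow> nat \<times> nat \<Rightarrow> bool" where
  "grid_adj = cart_adj path_adj path_adj"

end

theory Submission
  imports Defs
begin

text \<open>Label the rows of the grid by a function r and the columns by c, and take S to be the set of
  vertices (a, b) with T (r a) (c b) for a relation T on labels. How many neighbours a vertex (i, j)
  has in S depends only on the label of row i together with the labels of its neighbouring rows, and
  likewise for column j. So if every such row context and every column context lies in a finite set,
  the defining property of an independent [1,2]-set becomes a finite check on pairs of contexts.
  For m odd, label row i by i mod 4 and column j by j mod 2 and select rows congruent to 0 mod 4 at
  even columns and rows congruent to 2 mod 4 at odd columns; n odd is the transposed case. For m and n
  both even, a diagonal pattern of period 4 is used in both directions, except that the last four or
  two rows and columns (depending on the residue mod 4) carry extra labels repairing the boundary.\<close>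

lemma independent_12_setI:
  assumes "S \<subseteq> V" and "finite S"
    and "\<And>v. v \<in> V \<Longrightarrow> if v \<in> S then card {u\<in>S. E v u} = 0
                             else 1 \<le> card {u\<in>S. E v u} \<and> card {u\<in>S. E v u} \<le> 2"
  shows "independent_12_set V E S"
proof -
  have "\<not> E u v" if "u \<in> S" "v \<in> S" for u v
  proof -
    have "card {w\<in>S. E u w} = 0" using assms(3)[of u] assms(1) that(1) by auto
    then have "{w\<in>S. E u w} = {}" using \<open>finite S\<close> by simp
    then show ?thesis using that(2) by blast
  qed
  moreover have counts: "1 \<le> card {u\<in>S. E v u} \<and> card {u\<in>S. E v u} \<le> 2" if "v \<in> V - S" for v
    using assms(3)[of v] that by auto
  moreover have "\<exists>u\<in>S. E v u" if "v \<in> V - S" for v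
  proof -
    have "{u\<in>S. E v u} \<noteq> {}" using counts[OF that] by (metis card.empty not_one_le_zero)
    then show ?thesis by blast
  qed
  ultimately show ?thesis
    using assms(1) by (auto simp: independent_12_set_def independent_set_def dominating_set_def)
qed

definition path_nbrs :: "nat \<Rightarrow> nat \<Rightarrow> nat list" where
  "path_nbrs k i = (if 0 < i then [i - 1] else []) @ (if i + 1 < k then [i + 1] else [])"

lemma set_path_nbrs: "i < k \<Longrightarrow> set (path_nbrs k i) = {a. a < k \<and> path_adj i a}"
  by (auto simp: path_nbrs_def path_adj_def)

lemma distinct_path_nbrs: "distinct (path_nbrs k i)"
  by (auto simp: path_nbrs_def)

lemma grid_adj_iff: "grid_adj (i, j) (a, b) \<longleftrightarrow> (b = j \<and> path_adj i a) \<or> (a = i \<and> path_adj j b)"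
  by (auto simp: grid_adj_def cart_adj_def path_adj_def)

lemma grid_vertices_iff [simp]: "(a, b) \<in> grid_vertices m n \<longleftrightarrow> a < m \<and> b < n"
  by (simp add: grid_vertices_def cart_vertices_def path_vertices_def)

definition label_pattern :: "nat \<Rightarrow> nat \<Rightarrow> ('l \<Rightarrow> 'l \<Rightarrow> bool) \<Rightarrow> (nat \<Rightarrow> 'l) \<Rightarrow> (nat \<Rightarrow> 'l) \<Rightarrow> (nat \<times> nat) set" where
  "label_pattern m n T r c = {(a, b) \<in> grid_vertices m n. T (r a) (c b)}"

lemma card_label_pattern_nbrs:
  assumes "i < m" "j < n"
  shows "card {u \<in> label_pattern m n T r c. grid_adj (i, j) u} =
    length (filter (\<lambda>p. T p (c j)) (map r (path_nbrs m i))) + length (filter (T (r i)) (map c (path_nbrs n j)))"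
proof -
  let ?A = "{a \<in> set (path_nbrs m i). T (r a) (c j)}"
  let ?B = "{b \<in> set (path_nbrs n j). T (r i) (c b)}"
  have "{u \<in> label_pattern m n T r c. grid_adj (i, j) u} = (\<lambda>a. (a, j)) ` ?A \<union> (\<lambda>b. (i, b)) ` ?B"
    using assms by (auto simp: label_pattern_def grid_adj_iff set_path_nbrs)
  moreover have "(\<lambda>a. (a, j)) ` ?A \<inter> (\<lambda>b. (i, b)) ` ?B = {}"
    using assms by (auto simp: set_path_nbrs path_adj_def)
  ultimately have "card {u \<in> label_pattern m n T r c. grid_adj (i, j) u} = card ?A + card ?B"
    by (simp add: card_Un_disjoint card_image inj_on_def)
  then show ?thesis
    by (simp add: distinct_length_filter distinct_path_nbrs filter_map comp_def Int_def conj_commute)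
qed

definition label_context :: "(nat \<Rightarrow> 'l) \<Rightarrow> nat \<Rightarrow> nat \<Rightarrow> 'l \<times> 'l list" where
  "label_context w k i = (w i, map w (path_nbrs k i))"

text \<open>x and y are the contexts of the row and of the column of a grid vertex; k is the number of its
  neighbours in the pattern.\<close>
fun label_compatible :: "('l \<Rightarrow> 'l \<Rightarrow> bool) \<Rightarrow> 'l \<times> 'l list \<Rightarrow> 'l \<times> 'l list \<Rightarrow> bool" where
  "label_compatible T (a, ps) (b, qs) =
     (let k = length (filter (\<lambda>p. T p b) ps) + length (filter (T a) qs)
      in if T a b then k = 0 else 1 \<le> k \<and> k \<le> 2)"

lemma label_compatible_flip:
  "label_compatible T x y \<longleftrightarrow> label_compatible (\<lambda>a b. T b a) y x"
  by (cases x; cases y) (simp add: Let_def add.commute)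

lemma independent_12_set_label_pattern:
  assumes "\<And>i. i < m \<Longrightarrow> label_context r m i \<in> Cr"
    and "\<And>j. j < n \<Longrightarrow> label_context c n j \<in> Cc"
    and "\<forall>x\<in>Cr. \<forall>y\<in>Cc. label_compatible T x y"
  shows "independent_12_set (grid_vertices m n) grid_adj (label_pattern m n T r c)"
proof (rule independent_12_setI)
  show "label_pattern m n T r c \<subseteq> grid_vertices m n"
    by (auto simp: label_pattern_def)
  then show "finite (label_pattern m n T r c)"
    by (rule finite_subset) (simp add: grid_vertices_def cart_vertices_def path_vertices_def)
next
  fix v assume "v \<in> grid_vertices m n"
  then obtain i j where v: "v = (i, j)" "i < m" "j < n"
    by (cases v) auto
  have "label_compatible T (label_context r m i) (label_context c n j)"
    using assms v by blast
  moreover have "v \<in> label_pattern m n T r c \<longleftrightarrow> T (r i) (c j)"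
    using v by (simp add: label_pattern_def)
  ultimately show "if v \<in> label_pattern m n T r c then card {u \<in> label_pattern m n T r c. grid_adj v u} = 0
    else 1 \<le> card {u \<in> label_pattern m n T r c. grid_adj v u} \<and> card {u \<in> label_pattern m n T r c. grid_adj v u} \<le> 2"
    using v by (auto simp: card_label_pattern_nbrs label_context_def Let_def split: if_split_asm)
qed

definition mod4_contexts :: "(nat \<times> nat list) set" where
  "mod4_contexts = {(0, [1]), (0, [3, 1]), (1, [0, 2]), (2, [1, 3]), (3, [2, 0])}"

lemma label_context_mod4:
  assumes "\<And>x. x < p \<Longrightarrow> w x = x mod 4" and "i + 1 < p" and "p \<le> k"
  shows "label_context w k i \<in> mod4_contexts"
proof -
  have "label_context w k i = (i mod 4, (if 0 < i then [(i - 1) mod 4] else []) @ [Suc i mod 4])"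
    using assms by (auto simp: label_context_def path_nbrs_def)
  moreover have "(i mod 4, (if 0 < i then [(i - 1) mod 4] else []) @ [Suc i mod 4]) \<in> mod4_contexts"
  proof (cases i)
    case (Suc j)
    have "j mod 4 = 0 \<or> j mod 4 = 1 \<or> j mod 4 = 2 \<or> j mod 4 = 3" by linarith
    then show ?thesis
      using Suc by (auto simp: mod4_contexts_def mod_Suc)
  qed (simp add: mod4_contexts_def)
  ultimately show ?thesis by simp
qed

definition odd_contexts :: "(nat \<times> nat list) set" where
  "odd_contexts = mod4_contexts \<union> {(0, [3]), (2, [1])}"

lemma label_context_mod4_odd:
  assumes "odd m" and "2 \<le> m" and "i < m"
  shows "label_context (\<lambda>i. i mod 4) m i \<in> odd_contexts"
proof (cases "i + 1 < m")
  case True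
  then show ?thesis using label_context_mod4[of m] by (auto simp: odd_contexts_def)
next
  case False
  with assms have "m = Suc i" "0 < i" by auto
  then obtain j where j: "i = Suc j" "m = Suc (Suc j)"
    using gr0_implies_Suc by blast
  have "label_context (\<lambda>i. i mod 4) m i = (Suc (j mod 4) mod 4, [j mod 4])"
    using j by (simp add: label_context_def path_nbrs_def mod_Suc)
  moreover from j \<open>odd m\<close> have "j mod 4 = 1 \<or> j mod 4 = 3" by presburger
  ultimately show ?thesis
    by (auto simp: odd_contexts_def mod4_contexts_def)
qed

definition mod2_contexts :: "(nat \<times> nat list) set" where
  "mod2_contexts = {(0, [1]), (1, [0]), (0, [1, 1]), (1, [0, 0])}"

lemma label_context_mod2:
  assumes "2 \<le> n" and "j < n"
  shows "label_context (\<lambda>j. j mod 2) n j \<in> mod2_contexts"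
proof -
  have "0 < j \<Longrightarrow> (j - 1) mod 2 = 1 - j mod 2"
    by (cases j) (auto simp: mod_Suc)
  then have "label_context (\<lambda>j. j mod 2) n j =
      (j mod 2, (if 0 < j then [1 - j mod 2] else []) @ (if j + 1 < n then [1 - j mod 2] else []))"
    by (simp add: label_context_def path_nbrs_def mod_Suc)
  moreover have "j mod 2 = 0 \<or> j mod 2 = 1" by linarith
  moreover have "0 < j \<or> j + 1 < n" using assms by linarith
  ultimately show ?thesis by (auto simp: mod2_contexts_def)
qed

definition odd_pattern :: "nat \<Rightarrow> nat \<Rightarrow> bool" where
  "odd_pattern a b \<longleftrightarrow> (a, b) \<in> {(0, 0), (2, 1)}"

lemma label_compatible_odd_pattern:
  "\<forall>x \<in> odd_contexts. \<forall>y \<in> mod2_contexts. label_compatible odd_pattern x y"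
  by (simp add: odd_contexts_def mod4_contexts_def mod2_contexts_def odd_pattern_def)

lemma label_context_cong:
  "(\<And>x. x < k \<Longrightarrow> w x = v x) \<Longrightarrow> i < k \<Longrightarrow> label_context w k i = label_context v k i"
  by (auto simp: label_context_def path_nbrs_def)

lemma label_context_shift:
  "s < i \<Longrightarrow> i < k \<Longrightarrow> label_context (\<lambda>x. w (x + s)) (k - s) (i - s) = label_context w k i"
  by (auto simp: label_context_def path_nbrs_def)

text \<open>The contexts inside the tail are those of the word 3 # tail, since the label before position p
  is 3 (or those of tail alone if p = 0).\<close>
lemma label_context_mod4_then:
  assumes prefix: "\<And>x. x < p \<Longrightarrow> w x = x mod 4"
    and suffix: "\<And>d. d < length tail \<Longrightarrow> w (p + d) = tail ! d"
    and "4 dvd p" and "tail \<noteq> []" and i_lt: "i < p + length tail"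
  shows "label_context w (p + length tail) i \<in> mod4_contexts \<union> {(3, [2, hd tail])} \<union>
    (if p = 0 then label_context ((!) tail) (length tail) ` {..<length tail}
     else label_context ((!) (3 # tail)) (Suc (length tail)) ` {1..length tail})"
proof -
  consider "i + 1 < p" | "i + 1 = p" | "p \<le> i" by linarith
  then show ?thesis
  proof cases
    case 1
    then show ?thesis using label_context_mod4[OF prefix] by auto
  next
    case 2
    obtain q where "p = 4 * q"
      using \<open>4 dvd p\<close> by (rule dvdE)
    with 2 obtain r where "q = Suc r"
      using not0_implies_Suc by fastforce
    with 2 \<open>p = 4 * q\<close> have "i = 4 * r + 3"
      by simp
    then have "i mod 4 = 3" "0 < i" "(i - 1) mod 4 = 2"
      by (simp_all add: mod_Suc)
    then have "w i = 3" "w (i - 1) = 2"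
      using 2 prefix by simp_all
    moreover have "w (i + 1) = hd tail"
      using 2 suffix[of 0] \<open>tail \<noteq> []\<close> by (simp add: hd_conv_nth)
    moreover have "i + 1 < p + length tail" using 2 \<open>tail \<noteq> []\<close> by simp
    ultimately have "label_context w (p + length tail) i = (3, [2, hd tail])"
      using \<open>0 < i\<close> by (simp add: label_context_def path_nbrs_def)
    then show ?thesis by simp
  next
    case 3
    show ?thesis
    proof (cases "p = 0")
      case True
      have "label_context w (length tail) i = label_context ((!) tail) (length tail) i"
        using True suffix i_lt by (intro label_context_cong) auto
      then show ?thesis using True i_lt by simp
    next
      case False
      have "w (x + (p - 1)) = (3 # tail) ! x" if "x < Suc (length tail)" for x
      proof (cases x)
        case 0
        obtain q where "p = 4 * q" using \<open>4 dvd p\<close> by (rule dvdE)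
        with False have "(p - 1) mod 4 = 3" by (cases q) (simp_all add: mod_Suc)
        with False 0 show ?thesis using prefix[of "p - 1"] by simp
      next
        case (Suc d)
        with False that show ?thesis using suffix[of d] by (simp add: add.commute)
      qed
      then have "label_context ((!) (3 # tail)) (Suc (length tail)) (i - (p - 1)) =
          label_context (\<lambda>x. w (x + (p - 1))) (Suc (length tail)) (i - (p - 1))"
        using False 3 i_lt by (intro label_context_cong) auto
      also have "\<dots> = label_context w (p + length tail) i"
        using label_context_shift[of "p - 1" i "p + length tail" w] False 3 i_lt by simp
      finally have "label_context w (p + length tail) i =
          label_context ((!) (3 # tail)) (Suc (length tail)) (i + 1 - p)"
        using False by simp
      moreover have "i + 1 - p \<in> {1..length tail}" using 3 i_lt by auto
      ultimately show ?thesis using \<open>p \<noteq> 0\<close> by auto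
    qed
  qed
qed

definition even_tail :: "nat \<Rightarrow> nat list" where
  "even_tail m = (if 4 dvd m then [0, 4, 5, 6] else [7, 8])"

definition even_labels :: "nat \<Rightarrow> nat \<Rightarrow> nat" where
  "even_labels m i = (let p = m - length (even_tail m) in if i < p then i mod 4 else even_tail m ! (i - p))"

definition even_contexts :: "(nat \<times> nat list) set" where
  "even_contexts = mod4_contexts \<union>
     {(3, [2, 7]), (0, [3, 4]), (0, [4]), (4, [0, 5]), (5, [4, 6]), (6, [5]), (7, [3, 8]), (7, [8]), (8, [7])}"

lemma label_context_even_labels:
  assumes "even m" and "2 \<le> m" and "i < m"
  shows "label_context (even_labels m) m i \<in> even_contexts"
proof -
  define tail where "tail = even_tail m"
  define p where "p = m - length tail"
  let ?C = "mod4_contexts \<union> {(3, [2, hd tail])} \<union>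
      (if p = 0 then label_context ((!) tail) (length tail) ` {..<length tail}
       else label_context ((!) (3 # tail)) (Suc (length tail)) ` {1..length tail})"
  have "length tail \<le> m \<and> 4 dvd p"
  proof (cases "4 dvd m")
    case True
    with assms(2) have "4 \<le> m" by (auto elim!: dvdE)
    moreover have "length tail = 4" using True by (simp add: tail_def even_tail_def)
    ultimately show ?thesis using True by (simp add: p_def dvd_diff_nat)
  next
    case False
    with assms(1) have "m mod 4 = 2" by presburger
    then have "4 dvd m - 2" by (metis dvd_minus_mod)
    moreover have "length tail = 2" using False by (simp add: tail_def even_tail_def)
    ultimately show ?thesis using assms(2) by (simp add: p_def)
  qed
  then have "p + length tail = m" "4 dvd p" by (simp_all add: p_def)
  have "even_labels m x = x mod 4" if "x < p" for x
    using that unfolding even_labels_def Let_def tail_def[symmetric] p_def[symmetric] by simp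
  moreover have "even_labels m (p + d) = tail ! d" if "d < length tail" for d
    unfolding even_labels_def Let_def tail_def[symmetric] p_def[symmetric] by simp
  moreover have "tail \<noteq> []" by (simp add: tail_def even_tail_def)
  ultimately have "label_context (even_labels m) m i \<in> ?C"
    using label_context_mod4_then[of p "even_labels m" tail i] \<open>4 dvd p\<close> \<open>p + length tail = m\<close> assms(3)
    by simp
  moreover have "?C \<subseteq> even_contexts"
    unfolding tail_def even_tail_def
    by (cases "4 dvd m") (simp_all add: even_contexts_def mod4_contexts_def label_context_def path_nbrs_def
        lessThan_atLeast0 atLeastLessThan_upt atLeastAtMost_upt upt_rec)
  ultimately show ?thesis by blast
qed

text \<open>On the labels 0..3 this is the diagonal pattern of period 4; the labels 4, 5, 6 and 7, 8
  form the last block of rows (columns) when m is divisible by 4 or congruent to 2 mod 4.\<close>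
definition even_pattern :: "nat \<Rightarrow> nat \<Rightarrow> bool" where
  "even_pattern a b \<longleftrightarrow> (a, b) \<in> {(0, 2), (1, 0), (2, 3), (3, 1),
     (0, 5), (0, 7), (2, 6), (2, 8), (3, 4), (4, 0), (4, 8), (5, 3), (5, 6),
     (6, 1), (6, 4), (6, 7), (7, 0), (7, 6), (7, 7), (8, 2), (8, 5), (8, 8)}"

lemma label_compatible_even_pattern:
  "\<forall>x \<in> even_contexts. \<forall>y \<in> even_contexts. label_compatible even_pattern x y"
  by (simp add: even_contexts_def mod4_contexts_def even_pattern_def)

theorem mainTheorem2:
  fixes m n :: nat
  assumes "m \<ge> 2" and "n \<ge> 2"
  shows "\<exists>S. independent_12_set (grid_vertices m n) grid_adj S"
proof -
  consider "odd m" | "odd n" | "even m" "even n" by blast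
  then show ?thesis
  proof cases
    case 1
    then show ?thesis
      using independent_12_set_label_pattern[OF label_context_mod4_odd label_context_mod2
          label_compatible_odd_pattern] assms by blast
  next
    case 2
    then show ?thesis
      using independent_12_set_label_pattern[OF label_context_mod2 label_context_mod4_odd,
          of m n "\<lambda>a b. odd_pattern b a"] label_compatible_odd_pattern label_compatible_flip assms
      by blast
  next
    case 3
    then show ?thesis
      using independent_12_set_label_pattern[OF label_context_even_labels label_context_even_labels
          label_compatible_even_pattern] assms by blast
  qed
qed

end
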